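(* Let $\mathbb N$ be a symmetric directed graph on $m$ vertices (no self-arcs) with arcs enumerated $e_1,\dots,e_d$, each arc $e_k$ carrying a real matrix $C_{e_k}$ with $n$ columns and orthonormal rows. Let $\mathbb G$ be a symmetric spanning subgraph of $\mathbb N$, $J_{\mathbb G}$ its spanning incidence matrix, $w_1,\dots,w_d$ its spanning Metropolis weights, $\bar J_{\mathbb G}=J_{\mathbb G}\otimes I_n$, and $\Lambda_{\mathbb G}=\operatorname{blockdiag}(w_1C_{e_1}'C_{e_1},\dots,w_dC_{e_d}'C_{e_d})$. Then all eigenvalues of the symmetric matrix $A_{\mathbb G}=I_{mn}-\tfrac12\bar J_{\mathbb G}\Lambda_{\mathbb G}\bar J_{\mathbb G}'$ lie in $(-1,1]$. If moreover $\mathbb G=\mathbb N$ and $\bar{\mathbb N}$ is well-configured, then $A_{\mathbb N}$ has exactly $n$ eigenvalues equal to $1$ (with multiplicity) and all other eigenvalues lie in $(-1,1)$.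
   Context: A directed graph is symmetric if whenever $(i,j)$ is an arc so is $(j,i)$. Spanning incidence matrix: $J_{\mathbb G}\in\mathbb R^{m\times d}$ whose column $k$ has $+1$ in row $i$ and $-1$ in row $j$ if $e_k=(j,i)$ is an arc of $\mathbb G$, and is zero if $e_k$ is not an arc of $\mathbb G$ (for $\mathbb G=\mathbb N$ this is the ordinary incidence matrix). Spanning Metropolis weights: if $e_k=(j,i)$ is an arc of $\mathbb G$, $w_k=1/(1+\max\{\bar d_i,\bar d_j\})$ where $\bar d_v$ is the number of neighbors of $v$ in $\mathbb G$; otherwise $w_k=0$. $'$ denotes transpose. $\bar{\mathbb N}$ is well-configured if for all $x_1,\dots,x_m\in\mathbb R^n$, $C_{ji}x_i=C_{ji}x_j$ for every arc $(j,i)$ of $\mathbb N$ implies $x_1=\cdots=x_m$. *)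

theory Defs
  imports "Jordan_Normal_Form.Jordan_Normal_Form"
begin

text \<open>Vertices are 0..<m. Arcs are e 0, ..., e (d-1); e k = (j,i) is the arc from j to i.\<close>

definition arc_digraph :: "nat \<Rightarrow> nat \<Rightarrow> (nat \<Rightarrow> nat \<times> nat) \<Rightarrow> bool" where
  "arc_digraph m d e \<longleftrightarrow>
     (\<forall>k<d. fst (e k) < m \<and> snd (e k) < m \<and> fst (e k) \<noteq> snd (e k)) \<and> inj_on e {..<d}"

definition symmetric_arcs :: "(nat \<Rightarrow> nat \<times> nat) \<Rightarrow> nat set \<Rightarrow> bool" where
  "symmetric_arcs e S \<longleftrightarrow> (\<forall>k\<in>S. \<exists>k'\<in>S. e k' = (snd (e k), fst (e k)))"

definition nbr_count :: "nat \<Rightarrow> (nat \<Rightarrow> nat \<times> nat) \<Rightarrow> nat set \<Rightarrow> nat \<Rightarrow> nat" where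
  "nbr_count m e G v = card {u. u < m \<and> (\<exists>k\<in>G. e k = (u, v))}"

definition spanning_incidence ::
  "nat \<Rightarrow> nat \<Rightarrow> (nat \<Rightarrow> nat \<times> nat) \<Rightarrow> nat set \<Rightarrow> real mat" where
  "spanning_incidence m d e G = mat m d (\<lambda>(r, k).
      if k \<in> G then (if r = snd (e k) then 1 else if r = fst (e k) then -1 else 0) else 0)"

definition metropolis_weight ::
  "nat \<Rightarrow> (nat \<Rightarrow> nat \<times> nat) \<Rightarrow> nat set \<Rightarrow> nat \<Rightarrow> real" where
  "metropolis_weight m e G k =
     (if k \<in> G then 1 / (1 + real (max (nbr_count m e G (snd (e k))) (nbr_count m e G (fst (e k)))))
      else 0)"

definition kron :: "real mat \<Rightarrow> real mat \<Rightarrow> real mat" where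
  "kron A B = mat (dim_row A * dim_row B) (dim_col A * dim_col B)
     (\<lambda>(r, c). A $$ (r div dim_row B, c div dim_col B) * B $$ (r mod dim_row B, c mod dim_col B))"

definition Lambda_mat ::
  "nat \<Rightarrow> nat \<Rightarrow> (nat \<Rightarrow> nat \<times> nat) \<Rightarrow> (nat \<Rightarrow> real mat) \<Rightarrow> nat set \<Rightarrow> real mat" where
  "Lambda_mat m d e C G =
     diag_block_mat (map (\<lambda>k. metropolis_weight m e G k \<cdot>\<^sub>m (transpose_mat (C k) * C k)) [0..<d])"

definition A_mat ::
  "nat \<Rightarrow> nat \<Rightarrow> nat \<Rightarrow> (nat \<Rightarrow> nat \<times> nat) \<Rightarrow> (nat \<Rightarrow> real mat) \<Rightarrow> nat set \<Rightarrow> real mat" where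
  "A_mat m n d e C G =
     (let Jb = kron (spanning_incidence m d e G) (1\<^sub>m n)
      in 1\<^sub>m (m * n) - (1/2) \<cdot>\<^sub>m (Jb * Lambda_mat m d e C G * transpose_mat Jb))"

definition well_configured ::
  "nat \<Rightarrow> nat \<Rightarrow> nat \<Rightarrow> (nat \<Rightarrow> nat \<times> nat) \<Rightarrow> (nat \<Rightarrow> real mat) \<Rightarrow> bool" where
  "well_configured m n d e C \<longleftrightarrow>
     (\<forall>x :: nat \<Rightarrow> real vec. (\<forall>i<m. x i \<in> carrier_vec n) \<longrightarrow>
        (\<forall>k<d. C k *\<^sub>v x (snd (e k)) = C k *\<^sub>v x (fst (e k))) \<longrightarrow>
        (\<forall>i<m. \<forall>j<m. x i = x j))"

end

theory Submission
  imports Defs "Jordan_Normal_Form.Jordan_Normal_Form_Uniqueness"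
    "Jordan_Normal_Form.Jordan_Normal_Form_Existence"
begin

text \<open>Write \<open>x \<in> \<real>\<^sup>m\<^sup>n\<close> as blocks \<open>x\<^sub>1, \<dots>, x\<^sub>m \<in> \<real>\<^sup>n\<close> and
  \<open>M = J\<^sub>G \<Lambda>\<^sub>G J\<^sub>G'\<close>, so that \<open>A\<^sub>G = I - M/2\<close>. The quadratic form of \<open>M\<close> is
  \<open>\<Sum> w\<^sub>k \<bar>C\<^sub>k (x\<^sub>i - x\<^sub>j)\<bar>\<^sup>2\<close>, summed over the arcs \<open>e\<^sub>k = (j, i)\<close> of \<open>G\<close>. It is nonnegative,
  and it is strictly less than \<open>4 \<bar>x\<bar>\<^sup>2\<close> for \<open>x \<noteq> 0\<close>: the rows of \<open>C\<^sub>k\<close> are orthonormal,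
  \<open>\<bar>x\<^sub>i - x\<^sub>j\<bar>\<^sup>2 \<le> 2\<bar>x\<^sub>i\<bar>\<^sup>2 + 2\<bar>x\<^sub>j\<bar>\<^sup>2\<close>, and the Metropolis weights of the arcs entering
  (or leaving) a vertex of degree \<open>D\<close> add up to at most \<open>D / (1 + D) < 1\<close>. Hence every eigenvalue of
  \<open>A\<^sub>G\<close> lies in \<open>(-1, 1]\<close>.

  For \<open>G = N\<close> all weights are positive, so \<open>M x = 0\<close> forces \<open>C\<^sub>k x\<^sub>i = C\<^sub>k x\<^sub>j\<close> on every arc,
  and well-configuredness makes the kernel of \<open>M\<close> the \<open>n\<close>-dimensional space of vectors with equal
  blocks. Since \<open>A\<^sub>N\<close> is real symmetric, its Jordan blocks are trivial, so this geometric multiplicity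
  of the eigenvalue \<open>1\<close> is also its algebraic multiplicity.\<close>

hide_const (open) Coset.order

lemma real_scalar_prod_self_ge_0: "0 \<le> (v :: real vec) \<bullet> v"
  using conjugate_square_ge_0_vec[of v] by simp

lemma real_scalar_prod_self_eq_0_iff:
  "(v :: real vec) \<in> carrier_vec n \<Longrightarrow> v \<bullet> v = 0 \<longleftrightarrow> v = 0\<^sub>v n"
  using conjugate_square_eq_0_vec[of v n] by simp

lemma scalar_prod_diff_self_le:
  fixes x y :: "real vec"
  assumes "x \<in> carrier_vec n" and "y \<in> carrier_vec n"
  shows "(x - y) \<bullet> (x - y) \<le> 2 * (x \<bullet> x) + 2 * (y \<bullet> y)"
proof -
  have "(x - y) \<bullet> (x - y) = (\<Sum>i<n. (x $ i - y $ i)\<^sup>2)"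
    using assms by (simp add: scalar_prod_def lessThan_atLeast0 power2_eq_square)
  also have "\<dots> \<le> (\<Sum>i<n. 2 * (x $ i)\<^sup>2 + 2 * (y $ i)\<^sup>2)"
  proof (rule sum_mono)
    fix i
    show "(x $ i - y $ i)\<^sup>2 \<le> 2 * (x $ i)\<^sup>2 + 2 * (y $ i)\<^sup>2"
      using zero_le_power2[of "x $ i + y $ i"] by (simp add: power2_eq_square algebra_simps)
  qed
  also have "\<dots> = 2 * (x \<bullet> x) + 2 * (y \<bullet> y)"
    using assms by (simp add: scalar_prod_def lessThan_atLeast0 power2_eq_square
        sum.distrib sum_distrib_left)
  finally show ?thesis .
qed

lemma smult_mat_mult_vec:
  assumes "A \<in> carrier_mat nr nc" and "v \<in> carrier_vec nc"
  shows "(c \<cdot>\<^sub>m A) *\<^sub>v v = c \<cdot>\<^sub>v (A *\<^sub>v (v :: 'a :: comm_ring vec))"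
  using assms by (intro eq_vecI) (auto simp: scalar_prod_def sum_distrib_left ac_simps)

lemma mult_mat_vec_zero: "A \<in> carrier_mat nr nc \<Longrightarrow> A *\<^sub>v 0\<^sub>v nc = 0\<^sub>v nr"
  by (intro eq_vecI) (auto simp: scalar_prod_def)

lemma transpose_smult_mat: "transpose_mat (c \<cdot>\<^sub>m A) = c \<cdot>\<^sub>m transpose_mat A"
  by (rule eq_matI) auto

lemma scalar_prod_transpose_mult_mat_vec:
  assumes C: "C \<in> carrier_mat r n" and y: "y \<in> carrier_vec n"
  shows "y \<bullet> ((transpose_mat C * C) *\<^sub>v y) = (C *\<^sub>v y) \<bullet> (C *\<^sub>v (y :: 'a :: comm_ring vec))"
proof -
  have "(transpose_mat C * C) *\<^sub>v y = transpose_mat C *\<^sub>v (C *\<^sub>v y)"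
    using C y by (simp add: assoc_mult_mat_vec[of _ n r _ n])
  then show ?thesis
    using C y transpose_vec_mult_scalar[OF C y, of "C *\<^sub>v y"]
      comm_scalar_prod[of y n "transpose_mat C *\<^sub>v (C *\<^sub>v y)"] by simp
qed

text \<open>\<open>C\<^sup>T C\<close> is the orthogonal projection onto the row space of \<open>C\<close>; expand
  \<open>\<bar>y - C\<^sup>T C y\<bar>\<^sup>2 \<ge> 0\<close>.\<close>
lemma scalar_prod_orthonormal_rows_le:
  fixes C :: "real mat"
  assumes C: "C \<in> carrier_mat r n" and CC: "C * transpose_mat C = 1\<^sub>m r"
    and y: "y \<in> carrier_vec n"
  shows "(C *\<^sub>v y) \<bullet> (C *\<^sub>v y) \<le> y \<bullet> y"
proof -
  define u where "u = C *\<^sub>v y"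
  define p where "p = transpose_mat C *\<^sub>v u"
  have u: "u \<in> carrier_vec r" and p: "p \<in> carrier_vec n"
    unfolding u_def p_def using C y by auto
  have yp: "y \<bullet> p = u \<bullet> u"
    using comm_scalar_prod[OF y p] transpose_vec_mult_scalar[OF C y u] by (simp add: p_def u_def)
  have "C *\<^sub>v p = u"
    unfolding p_def using C u by (simp add: CC assoc_mult_mat_vec[symmetric, of _ r n _ r])
  then have pp: "p \<bullet> p = u \<bullet> u"
    using transpose_vec_mult_scalar[OF C p u] by (simp add: p_def)
  have "0 \<le> (y - p) \<bullet> (y - p)" by (rule real_scalar_prod_self_ge_0)
  also have "\<dots> = y \<bullet> y - 2 * (y \<bullet> p) + p \<bullet> p"
    using y p by (simp add: scalar_prod_def power2_diff sum_subtractf sum.distrib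
        sum_distrib_left algebra_simps)
  finally show ?thesis unfolding yp pp u_def by simp
qed

lemma transpose_diag_block_mat:
  "transpose_mat (diag_block_mat As) = diag_block_mat (map transpose_mat As)"
proof (induction As)
  case (Cons A As)
  let ?B = "diag_block_mat As"
  have "transpose_mat (four_block_mat A (0\<^sub>m (dim_row A) (dim_col ?B))
      (0\<^sub>m (dim_row ?B) (dim_col A)) ?B) = four_block_mat (transpose_mat A)
      (0\<^sub>m (dim_col A) (dim_row ?B)) (0\<^sub>m (dim_col ?B) (dim_row A)) (transpose_mat ?B)"
    by (rule trans[OF transpose_four_block_mat]) auto
  then show ?case
    by (simp add: Let_def flip: Cons.IH)
qed simp

section \<open>Real symmetric matrices\<close>

lemma real_symmetric_mat_mult_vec_twice_eq_0_iff:
  fixes M :: "real mat"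
  assumes M: "M \<in> carrier_mat n n" and sym: "transpose_mat M = M" and v: "v \<in> carrier_vec n"
  shows "M *\<^sub>v (M *\<^sub>v v) = 0\<^sub>v n \<longleftrightarrow> M *\<^sub>v v = 0\<^sub>v n"
proof
  have Mv: "M *\<^sub>v v \<in> carrier_vec n" using M v by simp
  assume "M *\<^sub>v (M *\<^sub>v v) = 0\<^sub>v n"
  then have "(transpose_mat M *\<^sub>v v) \<bullet> (M *\<^sub>v v) = 0"
    using transpose_vec_mult_scalar[OF M Mv v] v by simp
  then show "M *\<^sub>v v = 0\<^sub>v n"
    using real_scalar_prod_self_eq_0_iff[OF Mv] by (simp add: sym)
qed (use M in auto)

lemma real_symmetric_mat_kernel_pow:
  fixes X :: "real mat"
  assumes X: "X \<in> carrier_mat N N" and sym: "transpose_mat X = X"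
  shows "mat_kernel (X ^\<^sub>m Suc k) = mat_kernel X"
proof -
  have "X ^\<^sub>m Suc k *\<^sub>v v = 0\<^sub>v N \<longleftrightarrow> X *\<^sub>v v = 0\<^sub>v N" if "v \<in> carrier_vec N" for v
    using that
  proof (induction k arbitrary: v)
    case (Suc k)
    have "X ^\<^sub>m Suc (Suc k) *\<^sub>v v = (X ^\<^sub>m Suc k * X) *\<^sub>v v"
      by (simp only: pow_mat.simps)
    also have "\<dots> = X ^\<^sub>m Suc k *\<^sub>v (X *\<^sub>v v)"
      using X Suc.prems by (intro assoc_mult_mat_vec[of _ N N _ N]) auto
    finally show ?case
      using Suc X real_symmetric_mat_mult_vec_twice_eq_0_iff[OF X sym Suc.prems] by simp
  qed (use X in simp)
  then show ?thesis
    using X by (auto simp: mat_kernel_def)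
qed

text \<open>If \<open>R v = a v\<close>, then \<open>\<Sum>\<^sub>i\<^sub>j R\<^sub>i\<^sub>j v\<^sub>j conj v\<^sub>i\<close> equals both \<open>a \<bar>v\<bar>\<^sup>2\<close>
  and, by symmetry of the real matrix \<open>R\<close>, its own conjugate.\<close>
lemma real_symmetric_mat_eigenvalue_real:
  fixes R :: "real mat"
  assumes R: "R \<in> carrier_mat N N" and sym: "transpose_mat R = R"
    and ev: "eigenvalue (map_mat complex_of_real R) a"
  shows "cnj a = a"
proof -
  from ev obtain v where v: "v \<in> carrier_vec N" and v0: "v \<noteq> 0\<^sub>v N"
    and Av: "map_mat of_real R *\<^sub>v v = a \<cdot>\<^sub>v v"
    unfolding eigenvalue_def eigenvector_def using R by auto
  have R_sym: "R $$ (i, j) = R $$ (j, i)" if "i < N" "j < N" for i j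
    using that R arg_cong[OF sym, of "\<lambda>M. M $$ (j, i)"] by auto
  define s where "s = (\<Sum>i<N. \<Sum>j<N. of_real (R $$ (i, j)) * v $ j * cnj (v $ i))"
  define t where "t = (of_real (\<Sum>i<N. (cmod (v $ i))\<^sup>2) :: complex)"
  have Av_index: "(\<Sum>j<N. of_real (R $$ (i, j)) * v $ j) = a * v $ i" if "i < N" for i
    using arg_cong[OF Av, of "\<lambda>w. w $ i"] that R v
    by (simp add: mult_mat_vec_def scalar_prod_def lessThan_atLeast0)
  have "s = (\<Sum>i<N. (\<Sum>j<N. of_real (R $$ (i, j)) * v $ j) * cnj (v $ i))"
    unfolding s_def by (simp add: sum_distrib_right)
  also have "\<dots> = a * t"
    unfolding t_def of_real_sum complex_norm_square sum_distrib_left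
    by (intro sum.cong) (auto simp: Av_index)
  finally have s_eq: "s = a * t" .
  have "cnj s = (\<Sum>i<N. \<Sum>j<N. of_real (R $$ (i, j)) * cnj (v $ j) * v $ i)"
    unfolding s_def by (simp add: cnj_sum)
  also have "\<dots> = (\<Sum>j<N. \<Sum>i<N. of_real (R $$ (i, j)) * cnj (v $ j) * v $ i)"
    by (rule sum.swap)
  also have "\<dots> = s"
    unfolding s_def by (intro sum.cong refl) (auto simp: R_sym ac_simps)
  finally have s_real: "cnj s = s" .
  obtain i where i: "i < N" "v $ i \<noteq> 0"
    using v0 v by (metis eq_vecI carrier_vecD index_zero_vec)
  have "0 < (\<Sum>j<N. (cmod (v $ j))\<^sup>2)"
    by (rule sum_pos2[of _ i]) (use i in auto)
  then have "t \<noteq> 0"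
    unfolding t_def of_real_eq_0_iff by simp
  moreover have "cnj t = t"
    unfolding t_def by simp
  ultimately show ?thesis
    using s_eq s_real by simp
qed

lemma real_symmetric_mat_char_poly_splits:
  fixes R :: "real mat"
  assumes R: "R \<in> carrier_mat N N" and sym: "transpose_mat R = R"
  shows "\<exists>as. char_poly R = (\<Prod>a\<leftarrow>as. [:- a, 1:])"
proof -
  let ?C = "map_mat complex_of_real R"
  have C: "?C \<in> carrier_mat N N" using R by simp
  obtain as where as: "char_poly ?C = (\<Prod>a\<leftarrow>as. [:- a, 1:])"
    using char_poly_factorized[OF C] by blast
  have "cnj a = a" if "a \<in> set as" for a
  proof (rule real_symmetric_mat_eigenvalue_real[OF R sym])
    have "poly (char_poly ?C) a = 0"
      unfolding as using that by (simp add: poly_prod_list prod_list_zero_iff)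
    then show "eigenvalue ?C a" using eigenvalue_root_char_poly[OF C] by simp
  qed
  then have "map (\<lambda>a. [:- a, 1:]) as = map (\<lambda>a. map_poly of_real [:- a, 1:]) (map Re as)"
    by (auto simp: complex_eq_iff)
  interpret of_real_poly: map_poly_inj_idom_hom "of_real :: real \<Rightarrow> complex" ..
  have "map_poly of_real (char_poly R) = char_poly ?C"
    by (rule of_real_hom.char_poly_hom[OF R, symmetric])
  also have "\<dots> = map_poly of_real (\<Prod>a\<leftarrow>map Re as. [:- a, 1:])"
    unfolding as of_real_poly.hom_prod_list \<open>map _ as = _\<close> by (simp add: o_def)
  finally have "char_poly R = (\<Prod>a\<leftarrow>map Re as. [:- a, 1:])"
    by (rule of_real_poly.injectivity)
  then show ?thesis by blast
qed

lemma sum_list_min_eq_if_min_Suc_eq: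
  "sum_list (map (min (Suc k)) ns) = sum_list (map (min k) ns) \<Longrightarrow>
    sum_list ns = sum_list (map (min k) (ns :: nat list))"
proof (induction ns)
  case (Cons a ns)
  have "sum_list (map (min k) ns) \<le> sum_list (map (min (Suc k)) ns)"
    by (induction ns) auto
  with Cons.prems have "a \<le> k" by auto
  with Cons show ?case by auto
qed simp

text \<open>Once the chain of generalized eigenspaces stabilizes, all Jordan blocks of the eigenvalue
  are short, so its algebraic multiplicity is read off the stable dimension.\<close>
lemma order_char_poly_eq_dim_gen_eigenspace:
  assumes jnf: "jordan_nf A n_as"
    and stable: "dim_gen_eigenspace A a (Suc k) = dim_gen_eigenspace A a k"
  shows "order a (char_poly A) = dim_gen_eigenspace A a k"
proof -
  define ns where "ns = map fst (filter (\<lambda>na. snd na = a) n_as)"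
  have dim: "dim_gen_eigenspace A a j = sum_list (map (min j) ns)" for j
    using dim_gen_eigenspace[OF jnf, of a j] unfolding ns_def by (simp add: case_prod_unfold)
  have "order a (char_poly A) = sum_list ns"
    unfolding ns_def by (rule jordan_nf_order[OF jnf])
  also have "\<dots> = sum_list (map (min k) ns)"
    by (rule sum_list_min_eq_if_min_Suc_eq) (use stable in \<open>simp add: dim\<close>)
  finally show ?thesis by (simp add: dim)
qed

lemma transpose_char_matrix:
  "A \<in> carrier_mat N N \<Longrightarrow> transpose_mat (char_matrix A a) = char_matrix (transpose_mat A) a"
  unfolding char_matrix_def by (rule eq_matI) auto

text \<open>Symmetry of \<open>X = A - a I\<close> gives \<open>ker X\<^sup>2 = ker X\<close>, so all Jordan blocks of \<open>a\<close> have size one.\<close>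
lemma real_symmetric_order_char_poly:
  fixes A :: "real mat"
  assumes A: "A \<in> carrier_mat N N" and sym: "transpose_mat A = A"
  shows "order a (char_poly A) = dim_gen_eigenspace A a 1"
proof -
  obtain as where "char_poly A = (\<Prod>a\<leftarrow>as. [:- a, 1:])"
    using real_symmetric_mat_char_poly_splits[OF A sym] by blast
  then obtain n_as where jnf: "jordan_nf A n_as"
    using jordan_nf_exists[OF A] by blast
  have X: "char_matrix A a \<in> carrier_mat N N"
    and X_sym: "transpose_mat (char_matrix A a) = char_matrix A a"
    using A sym by (simp_all add: transpose_char_matrix)
  have "dim_gen_eigenspace A a (Suc 1) = dim_gen_eigenspace A a 1"
    unfolding dim_gen_eigenspace_def kernel_dim_def
    using real_symmetric_mat_kernel_pow[OF X X_sym, of 1] real_symmetric_mat_kernel_pow[OF X X_sym, of 0]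
      X by simp
  then show ?thesis
    by (rule order_char_poly_eq_dim_gen_eigenspace[OF jnf])
qed

section \<open>Block vectors and block matrices\<close>

lemma sum_lessThan_mult:
  fixes f :: "nat \<Rightarrow> 'a :: comm_monoid_add"
  shows "(\<Sum>r<m * n. f r) = (\<Sum>u<m. \<Sum>a<n. f (u * n + a))"
proof -
  have "(\<Sum>r<m * n. f r) = (\<Sum>u<m. \<Sum>r\<in>{u * n..<u * n + n}. f r)"
    by (rule sum.nat_group[symmetric])
  also have "\<dots> = (\<Sum>u<m. \<Sum>a<n. f (u * n + a))"
    using sum.shift_bounds_nat_ivl[of f 0 "u * n" n for u]
    by (simp add: lessThan_atLeast0 add.commute)
  finally show ?thesis .
qed

lemma block_index_lt:
  assumes "u < m" and "a < n"
  shows "u * n + a < m * (n :: nat)"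
proof -
  have "u * n + a < Suc u * n" using assms(2) by simp
  also have "\<dots> \<le> m * n" using assms(1) by (intro mult_le_mono1) simp
  finally show ?thesis .
qed

definition block_vec :: "nat \<Rightarrow> 'a vec \<Rightarrow> nat \<Rightarrow> 'a vec" where
  "block_vec n v u = vec n (\<lambda>a. v $ (u * n + a))"

lemma block_vec_carrier [simp]: "block_vec n v u \<in> carrier_vec n"
  and dim_block_vec [simp]: "dim_vec (block_vec n v u) = n"
  and index_block_vec [simp]: "a < n \<Longrightarrow> block_vec n v u $ a = v $ (u * n + a)"
  unfolding block_vec_def by auto

lemma eq_vec_blocksI:
  assumes "v \<in> carrier_vec (m * n)" and "w \<in> carrier_vec (m * n)"
    and "\<And>u. u < m \<Longrightarrow> block_vec n v u = block_vec n w u"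
  shows "v = w"
proof (rule eq_vecI)
  fix r assume "r < dim_vec w"
  then have r: "r < m * n" using assms(2) by simp
  then have "0 < n" by (cases n) auto
  with r have "r div n < m" and "r mod n < n"
    by (simp_all add: less_mult_imp_div_less)
  then show "v $ r = w $ r"
    using arg_cong[OF assms(3), of "r div n" "\<lambda>x. x $ (r mod n)"] by simp
qed (use assms in simp)

lemma block_vec_zero: "u < m \<Longrightarrow> block_vec n (0\<^sub>v (m * n)) u = 0\<^sub>v n"
  by (auto simp: vec_eq_iff block_index_lt)

lemma ex_block_vec_neq_0:
  assumes "v \<in> carrier_vec (m * n)" and "v \<noteq> 0\<^sub>v (m * n)"
  shows "\<exists>u<m. block_vec n v u \<noteq> 0\<^sub>v n"
proof (rule ccontr)
  assume "\<not> ?thesis"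
  then have "v = 0\<^sub>v (m * n)"
    by (intro eq_vec_blocksI[OF assms(1) zero_carrier_vec]) (auto simp: block_vec_zero)
  with assms(2) show False ..
qed

lemma scalar_prod_block_vec:
  assumes "v \<in> carrier_vec (m * n)" and "w \<in> carrier_vec (m * n)"
  shows "v \<bullet> w = (\<Sum>u<m. block_vec n v u \<bullet> block_vec n w u)"
  using assms by (simp add: scalar_prod_def lessThan_atLeast0[symmetric] sum_lessThan_mult)

lemma diag_block_mat_uniform_carrier:
  "\<forall>A\<in>set As. A \<in> carrier_mat n n \<Longrightarrow>
    diag_block_mat As \<in> carrier_mat (length As * n) (length As * n)"
  by (induction As) (auto simp: Let_def)

lemma index_diag_block_mat_uniform:
  assumes "\<forall>A\<in>set As. A \<in> carrier_mat n n" and "i < length As * n" and "j < length As * n"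
  shows "diag_block_mat As $$ (i, j) =
    (if i div n = j div n then As ! (i div n) $$ (i mod n, j mod n) else 0)"
  using assms
proof (induction As arbitrary: i j)
  case (Cons A As)
  have A: "A \<in> carrier_mat n n" and n: "0 < n" using Cons.prems by (auto intro: gr0I)
  have B: "diag_block_mat As \<in> carrier_mat (length As * n) (length As * n)"
    using Cons.prems by (intro diag_block_mat_uniform_carrier) auto
  show ?case
  proof (cases "i < n \<and> j < n")
    case False
    then consider "i < n" "n \<le> j" | "n \<le> i" "j < n" | "n \<le> i" "n \<le> j" by linarith
    then show ?thesis
      using Cons A B n by cases (auto simp: Let_def le_div_geq le_mod_geq)
  qed (use A B Cons.prems in \<open>auto simp: Let_def\<close>)
qed simp

lemma block_vec_diag_block_mat_mult:
  assumes As: "\<forall>A\<in>set As. A \<in> carrier_mat n n" and z: "z \<in> carrier_vec (length As * n)"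
    and k: "k < length As"
  shows "block_vec n (diag_block_mat As *\<^sub>v z) k = As ! k *\<^sub>v block_vec n z k"
proof -
  have Ak: "As ! k \<in> carrier_mat n n" using As k by simp
  show ?thesis
  proof (rule eq_vecI)
    fix a assume "a < dim_vec (As ! k *\<^sub>v block_vec n z k)"
    then have a: "a < n" using Ak by simp
    have "(diag_block_mat As *\<^sub>v z) $ (k * n + a) =
        (\<Sum>k'<length As. \<Sum>b<n. diag_block_mat As $$ (k * n + a, k' * n + b) * z $ (k' * n + b))"
      using diag_block_mat_uniform_carrier[OF As] z block_index_lt[OF k a]
      by (simp add: scalar_prod_def lessThan_atLeast0[symmetric] sum_lessThan_mult)
    also have "\<dots> = (\<Sum>k'<length As. if k' = k then \<Sum>b<n. As ! k $$ (a, b) * z $ (k * n + b) else 0)"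
      using a k block_index_lt[of _ "length As" _ n]
      by (intro sum.cong refl) (auto simp: index_diag_block_mat_uniform[OF As])
    also have "\<dots> = (\<Sum>b<n. As ! k $$ (a, b) * z $ (k * n + b))"
      using k by simp
    also have "\<dots> = (As ! k *\<^sub>v block_vec n z k) $ a"
      using Ak a by (simp add: scalar_prod_def lessThan_atLeast0)
    finally show "block_vec n (diag_block_mat As *\<^sub>v z) k $ a = (As ! k *\<^sub>v block_vec n z k) $ a"
      using a by simp
  qed (use Ak in simp)
qed

lemma scalar_prod_diag_block_mat:
  assumes As: "\<forall>A\<in>set As. A \<in> carrier_mat n n" and z: "z \<in> carrier_vec (length As * n)"
  shows "z \<bullet> (diag_block_mat As *\<^sub>v z) =
    (\<Sum>k<length As. block_vec n z k \<bullet> (As ! k *\<^sub>v block_vec n z k))"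
  using scalar_prod_block_vec[OF z, of "diag_block_mat As *\<^sub>v z"] z
    diag_block_mat_uniform_carrier[OF As]
  by (simp add: block_vec_diag_block_mat_mult[OF As z])

lemma kron_one_mat_carrier:
  "J \<in> carrier_mat p q \<Longrightarrow> kron J (1\<^sub>m n) \<in> carrier_mat (p * n) (q * n)"
  unfolding kron_def by simp

lemma block_vec_transpose_kron_one_mat_mult:
  assumes J: "J \<in> carrier_mat p q" and v: "v \<in> carrier_vec (p * n)" and k: "k < q"
  shows "block_vec n (transpose_mat (kron J (1\<^sub>m n)) *\<^sub>v v) k =
    vec n (\<lambda>a. \<Sum>u<p. J $$ (u, k) * v $ (u * n + a))"
proof (rule eq_vecI)
  fix a assume "a < dim_vec (vec n (\<lambda>a. \<Sum>u<p. J $$ (u, k) * v $ (u * n + a)))"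
  then have a: "a < n" by simp
  have "(transpose_mat (kron J (1\<^sub>m n)) *\<^sub>v v) $ (k * n + a) =
      (\<Sum>u<p. \<Sum>b<n. kron J (1\<^sub>m n) $$ (u * n + b, k * n + a) * v $ (u * n + b))"
    using kron_one_mat_carrier[OF J, of n] v block_index_lt[OF k a]
    by (simp add: scalar_prod_def lessThan_atLeast0[symmetric] sum_lessThan_mult)
  also have "\<dots> = (\<Sum>u<p. \<Sum>b<n. if b = a then J $$ (u, k) * v $ (u * n + a) else 0)"
    using J a k block_index_lt[of _ p _ n] block_index_lt[OF k a]
    by (intro sum.cong refl) (auto simp: kron_def)
  finally show "block_vec n (transpose_mat (kron J (1\<^sub>m n)) *\<^sub>v v) k $ a =
      vec n (\<lambda>a. \<Sum>u<p. J $$ (u, k) * v $ (u * n + a)) $ a"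
    using a by simp
qed simp

text \<open>Row \<open>r\<close> of the first \<open>m - 1\<close> block rows compares entry \<open>r\<close> with the entry at the
  same position of the last block; the last block row is zero.\<close>
definition blocks_equal_mat :: "nat \<Rightarrow> nat \<Rightarrow> 'a :: field mat" where
  "blocks_equal_mat m n = mat (m * n) (m * n) (\<lambda>(r, c).
     if r < (m - 1) * n \<and> c = r then 1
     else if r < (m - 1) * n \<and> c = (m - 1) * n + r mod n then - 1 else 0)"

lemma blocks_equal_mat_carrier: "blocks_equal_mat m n \<in> carrier_mat (m * n) (m * n)"
  unfolding blocks_equal_mat_def by simp

lemma blocks_equal_mat_mult_index:
  assumes m: "0 < m" and v: "v \<in> carrier_vec (m * n)" and r: "r < m * n"
  shows "(blocks_equal_mat m n *\<^sub>v v) $ r =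
    (if r < (m - 1) * n then v $ r - v $ ((m - 1) * n + r mod n) else 0)"
proof -
  have last: "(m - 1) * n + r mod n < m * n"
    using r block_index_lt[of "m - 1" m "r mod n" n] m by (cases n) auto
  have "r < (m - 1) * n \<Longrightarrow> r \<noteq> (m - 1) * n + r mod n" by auto
  then have "(blocks_equal_mat m n *\<^sub>v v) $ r = (\<Sum>c<m * n.
      (if r < (m - 1) * n \<and> c = r then v $ c else 0) -
      (if r < (m - 1) * n \<and> c = (m - 1) * n + r mod n then v $ c else 0))"
    using v r by (auto simp: blocks_equal_mat_def scalar_prod_def lessThan_atLeast0
        intro!: sum.cong)
  then show ?thesis
    using r last by (simp add: sum_subtractf)
qed

lemma mat_kernel_blocks_equal_mat:
  assumes m: "0 < m"
  shows "v \<in> mat_kernel (blocks_equal_mat m n) \<longleftrightarrow>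
    v \<in> carrier_vec (m * n) \<and> (\<forall>u<m. block_vec n v u = block_vec n v (m - 1))"
proof (cases "v \<in> carrier_vec (m * n)")
  case v: True
  have "blocks_equal_mat m n *\<^sub>v v = 0\<^sub>v (m * n) \<longleftrightarrow>
      (\<forall>r<(m - 1) * n. v $ r = v $ ((m - 1) * n + r mod n))"
    using blocks_equal_mat_carrier[of m n] blocks_equal_mat_mult_index[OF m v] m
    by (auto simp: vec_eq_iff less_le_trans[OF _ mult_le_mono1[OF diff_le_self]])
  also have "\<dots> \<longleftrightarrow> (\<forall>u<m. \<forall>a<n. v $ (u * n + a) = v $ ((m - 1) * n + a))"
  proof safe
    fix u a assume all: "\<forall>r<(m - 1) * n. v $ r = v $ ((m - 1) * n + r mod n)"
      and u: "u < m" and a: "a < n"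
    show "v $ (u * n + a) = v $ ((m - 1) * n + a)"
      using all[rule_format, of "u * n + a"] block_index_lt[of u "m - 1" a n] u a
      by (cases "u = m - 1") auto
  next
    fix r assume all: "\<forall>u<m. \<forall>a<n. v $ (u * n + a) = v $ ((m - 1) * n + a)"
      and r: "r < (m - 1) * n"
    then have "0 < n" by (cases n) auto
    with r have "r div n < m" and "r mod n < n"
      using less_mult_imp_div_less[OF r] by auto
    then show "v $ r = v $ ((m - 1) * n + r mod n)"
      using all by (metis div_mult_mod_eq)
  qed
  also have "\<dots> \<longleftrightarrow> (\<forall>u<m. block_vec n v u = block_vec n v (m - 1))"
    by (auto simp: vec_eq_iff)
  finally show ?thesis
    using v by (simp add: mat_kernel_def blocks_equal_mat_def)
qed (simp add: mat_kernel_def blocks_equal_mat_def)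

lemma kernel_dim_blocks_equal_mat:
  assumes m: "0 < m"
  shows "kernel.dim (m * n) (blocks_equal_mat m n :: 'a :: field mat) = n"
proof -
  let ?D = "blocks_equal_mat m n :: 'a mat"
  define f where "f i = (if i < (m - 1) * n then i else m * n)" for i
  have mn: "(m - 1) * n \<le> m * n" by (simp add: mult_le_mono1)
  have "pivot_fun ?D f (m * n)"
  proof (rule pivot_funI)
    fix i j assume "i < m * n" and "j < f i"
    then show "?D $$ (i, j) = 0"
      using mn unfolding f_def blocks_equal_mat_def by (auto split: if_splits)
  next
    fix i i' assume "i < m * n" "f i < m * n" "i' < m * n" "i' \<noteq> i"
    then show "?D $$ (i', f i) = 0"
      unfolding f_def blocks_equal_mat_def by (auto split: if_splits)
  qed (use mn in \<open>auto simp: f_def blocks_equal_mat_def split: if_splits\<close>)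
  then have "row_echelon_form ?D"
    unfolding row_echelon_form_def by (auto simp: blocks_equal_mat_def)
  then have "kernel.dim (m * n) ?D = m * n - card {i. i < m * n \<and> row ?D i \<noteq> 0\<^sub>v (m * n)}"
    using find_base_vectors(6) blocks_equal_mat_carrier by blast
  also have "{i. i < m * n \<and> row ?D i \<noteq> 0\<^sub>v (m * n)} = {..<(m - 1) * n}"
  proof (intro Set.set_eqI iffI)
    fix i assume i: "i \<in> {..<(m - 1) * n}"
    then have "i < m * n" using mn by (simp add: less_le_trans)
    moreover from this i have "row ?D i $ i = 1" by (simp add: blocks_equal_mat_def)
    ultimately show "i \<in> {i. i < m * n \<and> row ?D i \<noteq> 0\<^sub>v (m * n)}" by auto
  qed (auto simp: blocks_equal_mat_def vec_eq_iff split: if_splits)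
  also have "m * n - card {..<(m - 1) * n} = n"
    using m by (cases m) auto
  finally show ?thesis .
qed

section \<open>The Metropolis matrix of a spanning subgraph\<close>

locale metropolis_subgraph =
  fixes m n d :: nat and e :: "nat \<Rightarrow> nat \<times> nat" and C :: "nat \<Rightarrow> real mat"
    and G :: "nat set"
  assumes arc_digraph: "arc_digraph m d e"
    and C_orth: "\<forall>k<d. dim_col (C k) = n \<and> C k * transpose_mat (C k) = 1\<^sub>m (dim_row (C k))"
    and G_sub: "G \<subseteq> {..<d}"
    and G_sym: "symmetric_arcs e G"
begin

abbreviation "J \<equiv> spanning_incidence m d e G"
abbreviation "Jbar \<equiv> kron J (1\<^sub>m n)"
abbreviation "w \<equiv> metropolis_weight m e G"
abbreviation "deg \<equiv> nbr_count m e G"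
abbreviation "Lambda \<equiv> Lambda_mat m d e C G"
abbreviation "M \<equiv> Jbar * Lambda * transpose_mat Jbar"

definition arc_diff :: "real vec \<Rightarrow> nat \<Rightarrow> real vec" where
  "arc_diff v k = block_vec n v (snd (e k)) - block_vec n v (fst (e k))"

lemma arc_ends: "k < d \<Longrightarrow> fst (e k) < m \<and> snd (e k) < m \<and> fst (e k) \<noteq> snd (e k)"
  using arc_digraph unfolding arc_digraph_def by blast

lemma C_dim: "k < d \<Longrightarrow> dim_col (C k) = n"
  by (rule C_orth[rule_format, THEN conjunct1])

lemma C_carrier: "k < d \<Longrightarrow> C k \<in> carrier_mat (dim_row (C k)) n"
  by (intro carrier_matI refl C_dim)

lemma gram_carrier: "k < d \<Longrightarrow> transpose_mat (C k) * C k \<in> carrier_mat n n"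
  by (intro carrier_matI) (simp_all add: C_dim)

lemma J_carrier: "J \<in> carrier_mat m d"
  unfolding spanning_incidence_def by simp

lemma Jbar_carrier: "Jbar \<in> carrier_mat (m * n) (d * n)"
  by (rule kron_one_mat_carrier[OF J_carrier])

lemma block_vec_transpose_Jbar_mult:
  assumes v: "v \<in> carrier_vec (m * n)" and k: "k < d"
  shows "block_vec n (transpose_mat Jbar *\<^sub>v v) k = (if k \<in> G then arc_diff v k else 0\<^sub>v n)"
proof -
  have "(\<Sum>u<m. J $$ (u, k) * v $ (u * n + a)) =
      (if k \<in> G then v $ (snd (e k) * n + a) - v $ (fst (e k) * n + a) else 0)" for a
    using arc_ends[OF k] k
    by (auto simp: spanning_incidence_def if_distrib[of "\<lambda>x. x * _"] sum.If_cases
        cong: if_cong)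
  then show ?thesis
    unfolding block_vec_transpose_kron_one_mat_mult[OF J_carrier v k]
    by (auto simp: arc_diff_def)
qed

lemma Lambda_blocks_carrier:
  "\<forall>B\<in>set (map (\<lambda>k. w k \<cdot>\<^sub>m (transpose_mat (C k) * C k)) [0..<d]). B \<in> carrier_mat n n"
  using gram_carrier by simp

lemma Lambda_carrier: "Lambda \<in> carrier_mat (d * n) (d * n)"
  using diag_block_mat_uniform_carrier[OF Lambda_blocks_carrier] by (simp add: Lambda_mat_def)

lemma M_carrier: "M \<in> carrier_mat (m * n) (m * n)"
  using Jbar_carrier Lambda_carrier by auto

lemma M_mult_vec:
  assumes v: "v \<in> carrier_vec (m * n)"
  shows "M *\<^sub>v v = Jbar *\<^sub>v (Lambda *\<^sub>v (transpose_mat Jbar *\<^sub>v v))"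
proof -
  have "M *\<^sub>v v = (Jbar * Lambda) *\<^sub>v (transpose_mat Jbar *\<^sub>v v)"
    using Jbar_carrier Lambda_carrier v by (intro assoc_mult_mat_vec[of _ "m * n" "d * n"]) auto
  also have "\<dots> = Jbar *\<^sub>v (Lambda *\<^sub>v (transpose_mat Jbar *\<^sub>v v))"
    using Jbar_carrier Lambda_carrier v by (intro assoc_mult_mat_vec[of _ "m * n" "d * n"]) auto
  finally show ?thesis .
qed

lemma quadratic_form_Lambda_block:
  assumes v: "v \<in> carrier_vec (m * n)" and k: "k < d"
  defines "z \<equiv> block_vec n (transpose_mat Jbar *\<^sub>v v) k"
  shows "z \<bullet> ((w k \<cdot>\<^sub>m (transpose_mat (C k) * C k)) *\<^sub>v z) =
    (if k \<in> G then w k * ((C k *\<^sub>v arc_diff v k) \<bullet> (C k *\<^sub>v arc_diff v k)) else 0)"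
proof -
  have P: "transpose_mat (C k) * C k \<in> carrier_mat n n"
    using k by (rule gram_carrier)
  have z_eq: "z = (if k \<in> G then arc_diff v k else 0\<^sub>v n)"
    unfolding z_def by (rule block_vec_transpose_Jbar_mult[OF v k])
  show ?thesis
  proof (cases "k \<in> G")
    case True
    have y: "arc_diff v k \<in> carrier_vec n"
      by (simp add: arc_diff_def)
    have "z \<bullet> ((w k \<cdot>\<^sub>m (transpose_mat (C k) * C k)) *\<^sub>v z) =
        arc_diff v k \<bullet> (w k \<cdot>\<^sub>v ((transpose_mat (C k) * C k) *\<^sub>v arc_diff v k))"
      using True by (simp add: z_eq smult_mat_mult_vec[OF P y])
    also have "\<dots> = w k * (arc_diff v k \<bullet> ((transpose_mat (C k) * C k) *\<^sub>v arc_diff v k))"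
      by (rule scalar_prod_smult_distrib[OF y mult_mat_vec_carrier[OF P y]])
    finally show ?thesis
      using True scalar_prod_transpose_mult_mat_vec[OF C_carrier[OF k] y] by simp
  next
    case False
    have "(w k \<cdot>\<^sub>m (transpose_mat (C k) * C k)) *\<^sub>v 0\<^sub>v n \<in> carrier_vec n"
      by (rule mult_mat_vec_carrier[OF smult_carrier_mat[OF P] zero_carrier_vec])
    then show ?thesis
      unfolding z_eq using False by simp
  qed
qed

lemma quadratic_form_M:
  assumes v: "v \<in> carrier_vec (m * n)"
  shows "v \<bullet> (M *\<^sub>v v) = (\<Sum>k\<in>G. w k * ((C k *\<^sub>v arc_diff v k) \<bullet> (C k *\<^sub>v arc_diff v k)))"
proof -
  define z where "z = transpose_mat Jbar *\<^sub>v v"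
  have z: "z \<in> carrier_vec (d * n)" unfolding z_def using Jbar_carrier v by simp
  have "v \<bullet> (M *\<^sub>v v) = v \<bullet> (Jbar *\<^sub>v (Lambda *\<^sub>v z))"
    by (simp add: z_def M_mult_vec[OF v])
  also have "\<dots> = z \<bullet> (Lambda *\<^sub>v z)"
    using transpose_vec_mult_scalar[OF Jbar_carrier, of "Lambda *\<^sub>v z" v] Lambda_carrier v z
    by (simp add: z_def)
  also have "\<dots> = (\<Sum>k<d. block_vec n z k \<bullet>
      ((w k \<cdot>\<^sub>m (transpose_mat (C k) * C k)) *\<^sub>v block_vec n z k))"
    using scalar_prod_diag_block_mat[OF Lambda_blocks_carrier] z by (simp add: Lambda_mat_def)
  also have "\<dots> = (\<Sum>k<d. if k \<in> G then
      w k * ((C k *\<^sub>v arc_diff v k) \<bullet> (C k *\<^sub>v arc_diff v k)) else 0)"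
    unfolding z_def using quadratic_form_Lambda_block[OF v] by (intro sum.cong refl) auto
  also have "\<dots> = (\<Sum>k\<in>G. w k * ((C k *\<^sub>v arc_diff v k) \<bullet> (C k *\<^sub>v arc_diff v k)))"
    using G_sub by (simp add: sum.If_cases Int_absorb1)
  finally show ?thesis .
qed

lemma weight_nonneg: "0 \<le> w k"
  unfolding metropolis_weight_def by simp

lemma weight_le_endpoint:
  assumes "k \<in> G" and "u = snd (e k) \<or> u = fst (e k)"
  shows "w k \<le> 1 / (1 + real (deg u))"
proof -
  have "real (deg u) \<le> real (max (deg (snd (e k))) (deg (fst (e k))))"
    using assms(2) by auto
  then show ?thesis
    using assms(1) unfolding metropolis_weight_def by (simp add: divide_left_mono)
qed

lemma arc_eqD: "k \<in> G \<Longrightarrow> k' \<in> G \<Longrightarrow> e k = e k' \<Longrightarrow> k = k'"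
  using arc_digraph G_sub unfolding arc_digraph_def by (auto dest: inj_onD)

lemma finite_neighbours: "finite {u'. u' < m \<and> (\<exists>k\<in>G. e k = (u', u))}"
  by (rule finite_subset[of _ "{..<m}"]) auto

lemma card_in_arcs_le: "card {k\<in>G. snd (e k) = u} \<le> deg u"
  unfolding nbr_count_def
proof (rule card_inj_on_le[OF _ _ finite_neighbours])
  show "inj_on (\<lambda>k. fst (e k)) {k\<in>G. snd (e k) = u}"
    by (auto intro!: inj_onI arc_eqD simp: prod_eq_iff)
  show "(\<lambda>k. fst (e k)) ` {k\<in>G. snd (e k) = u} \<subseteq> {u'. u' < m \<and> (\<exists>k\<in>G. e k = (u', u))}"
    using arc_ends G_sub by (force simp: prod_eq_iff)
qed

text \<open>Out-arcs at \<open>u\<close> are counted through their reversals, which lie in \<open>G\<close> by symmetry.\<close>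
lemma card_out_arcs_le: "card {k\<in>G. fst (e k) = u} \<le> deg u"
  unfolding nbr_count_def
proof (rule card_inj_on_le[OF _ _ finite_neighbours])
  show "inj_on (\<lambda>k. snd (e k)) {k\<in>G. fst (e k) = u}"
    by (auto intro!: inj_onI arc_eqD simp: prod_eq_iff)
  show "(\<lambda>k. snd (e k)) ` {k\<in>G. fst (e k) = u} \<subseteq> {u'. u' < m \<and> (\<exists>k\<in>G. e k = (u', u))}"
  proof clarify
    fix k assume k: "k \<in> G" "u = fst (e k)"
    then obtain k' where "k' \<in> G" "e k' = (snd (e k), fst (e k))"
      using G_sym unfolding symmetric_arcs_def by blast
    with k arc_ends[of k] G_sub show "snd (e k) < m \<and> (\<exists>k'\<in>G. e k' = (snd (e k), fst (e k)))"
      by auto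
  qed
qed

lemma sum_weights_at_vertex_le:
  assumes "\<And>k. k \<in> K \<Longrightarrow> k \<in> G \<and> (u = snd (e k) \<or> u = fst (e k))"
    and "card K \<le> deg u"
  shows "(\<Sum>k\<in>K. w k) \<le> real (deg u) / (1 + real (deg u))"
proof -
  have "(\<Sum>k\<in>K. w k) \<le> real (card K) * (1 / (1 + real (deg u)))"
    using assms(1) weight_le_endpoint by (intro sum_bounded_above) blast
  also have "\<dots> \<le> real (deg u) * (1 / (1 + real (deg u)))"
    using assms(2) by (intro mult_right_mono) auto
  finally show ?thesis by simp
qed

lemma sum_weighted_endpoints_le:
  fixes S :: "nat \<Rightarrow> real"
  assumes S0: "\<And>u. 0 \<le> S u"
  shows "(\<Sum>k\<in>G. w k * (2 * S (snd (e k)) + 2 * S (fst (e k)))) \<le>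
    4 * (\<Sum>u<m. S u * (real (deg u) / (1 + real (deg u))))"
proof -
  have group: "(\<Sum>k\<in>G. w k * S (g k)) = (\<Sum>u<m. S u * (\<Sum>k\<in>{k\<in>G. g k = u}. w k))"
    if "\<And>k. k \<in> G \<Longrightarrow> g k < m" for g
  proof -
    have "finite G" using G_sub finite_subset by blast
    then have "(\<Sum>k\<in>G. w k * S (g k)) = (\<Sum>u<m. \<Sum>k\<in>{k\<in>G. g k = u}. w k * S (g k))"
      using that by (intro sum.group[symmetric]) auto
    then show ?thesis
      by (simp add: sum_distrib_left mult.commute)
  qed
  have "(\<Sum>k\<in>G. w k * (2 * S (snd (e k)) + 2 * S (fst (e k)))) =
      2 * (\<Sum>k\<in>G. w k * S (snd (e k))) + 2 * (\<Sum>k\<in>G. w k * S (fst (e k)))"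
    by (simp add: sum.distrib sum_distrib_left algebra_simps)
  also have "\<dots> = 2 * (\<Sum>u<m. S u * (\<Sum>k\<in>{k\<in>G. snd (e k) = u}. w k))
      + 2 * (\<Sum>u<m. S u * (\<Sum>k\<in>{k\<in>G. fst (e k) = u}. w k))"
    using arc_ends G_sub by (subst (1 2) group) auto
  also have "\<dots> \<le> 2 * (\<Sum>u<m. S u * (real (deg u) / (1 + real (deg u))))
      + 2 * (\<Sum>u<m. S u * (real (deg u) / (1 + real (deg u))))"
    by (intro add_mono mult_left_mono sum_mono S0 sum_weights_at_vertex_le card_in_arcs_le
        card_out_arcs_le) auto
  finally show ?thesis by simp
qed

lemma quadratic_form_M_nonneg: "v \<in> carrier_vec (m * n) \<Longrightarrow> 0 \<le> v \<bullet> (M *\<^sub>v v)"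
  unfolding quadratic_form_M
  by (intro sum_nonneg mult_nonneg_nonneg weight_nonneg real_scalar_prod_self_ge_0)

lemma quadratic_form_M_less:
  assumes v: "v \<in> carrier_vec (m * n)" and v0: "v \<noteq> 0\<^sub>v (m * n)"
  shows "v \<bullet> (M *\<^sub>v v) < 4 * (v \<bullet> v)"
proof -
  define S where "S u = block_vec n v u \<bullet> block_vec n v u" for u
  define c where "c u = real (deg u) / (1 + real (deg u))" for u
  have S0: "0 \<le> S u" for u
    unfolding S_def by (rule real_scalar_prod_self_ge_0)
  have "v \<bullet> (M *\<^sub>v v) \<le> (\<Sum>k\<in>G. w k * (arc_diff v k \<bullet> arc_diff v k))"
    unfolding quadratic_form_M[OF v] using G_sub
    by (intro sum_mono mult_left_mono weight_nonneg scalar_prod_orthonormal_rows_le[OF C_carrier])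
      (auto simp: arc_diff_def C_orth[rule_format, THEN conjunct2])
  also have "\<dots> \<le> (\<Sum>k\<in>G. w k * (2 * S (snd (e k)) + 2 * S (fst (e k))))"
    unfolding S_def arc_diff_def
    by (intro sum_mono mult_left_mono weight_nonneg scalar_prod_diff_self_le[of _ n]) auto
  also have "\<dots> \<le> 4 * (\<Sum>u<m. S u * c u)"
    unfolding c_def by (rule sum_weighted_endpoints_le[OF S0])
  also have "\<dots> < 4 * (\<Sum>u<m. S u)"
  proof -
    obtain u where u: "u < m" and "block_vec n v u \<noteq> 0\<^sub>v n"
      using ex_block_vec_neq_0[OF v v0] by blast
    then have "S u \<noteq> 0"
      unfolding S_def by (simp add: real_scalar_prod_self_eq_0_iff[of _ n])
    then have "S u * c u < S u * 1"
      using S0[of u] by (intro mult_strict_left_mono) (auto simp: c_def)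
    moreover have "S u' * c u' \<le> S u'" for u'
      using S0[of u'] by (intro mult_left_le) (auto simp: c_def)
    ultimately have "(\<Sum>u<m. S u * c u) < (\<Sum>u<m. S u)"
      using u by (intro sum_strict_mono_ex1) auto
    then show ?thesis by simp
  qed
  also have "\<dots> = 4 * (v \<bullet> v)"
    using scalar_prod_block_vec[OF v v] by (simp add: S_def)
  finally show ?thesis .
qed

lemma Lambda_symmetric: "transpose_mat Lambda = Lambda"
proof -
  have "transpose_mat (w k \<cdot>\<^sub>m (transpose_mat (C k) * C k)) = w k \<cdot>\<^sub>m (transpose_mat (C k) * C k)"
    if "k < d" for k
    using transpose_mult[OF transpose_carrier_mat[THEN iffD2, OF C_carrier[OF that]]
        C_carrier[OF that]]
    by (simp add: transpose_smult_mat)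
  then show ?thesis
    unfolding Lambda_mat_def transpose_diag_block_mat by (subst map_idI) auto
qed

lemma M_symmetric: "transpose_mat M = M"
proof -
  have "transpose_mat M = transpose_mat (transpose_mat Jbar) * transpose_mat (Jbar * Lambda)"
    using Jbar_carrier Lambda_carrier by (intro transpose_mult) auto
  also have "\<dots> = Jbar * (transpose_mat Lambda * transpose_mat Jbar)"
    using Jbar_carrier Lambda_carrier by (simp add: transpose_mult[of _ "m * n" "d * n"])
  also have "\<dots> = M"
    using Jbar_carrier Lambda_carrier
    by (simp add: Lambda_symmetric assoc_mult_mat[of _ "m * n" "d * n"])
  finally show ?thesis .
qed

abbreviation "A \<equiv> A_mat m n d e C G"

lemma A_eq: "A = 1\<^sub>m (m * n) - (1 / 2) \<cdot>\<^sub>m M"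
  unfolding A_mat_def Let_def by simp

lemma A_carrier: "A \<in> carrier_mat (m * n) (m * n)"
  unfolding A_eq using M_carrier by (intro minus_carrier_mat smult_carrier_mat)

lemma A_symmetric: "transpose_mat A = A"
proof -
  have "transpose_mat A = transpose_mat (1\<^sub>m (m * n)) - transpose_mat ((1 / 2) \<cdot>\<^sub>m M)"
    unfolding A_eq using M_carrier by (intro transpose_minus) auto
  then show ?thesis
    by (simp add: transpose_smult_mat M_symmetric A_eq)
qed

lemma quadratic_form_A:
  assumes v: "v \<in> carrier_vec (m * n)"
  shows "v \<bullet> (A *\<^sub>v v) = v \<bullet> v - 1 / 2 * (v \<bullet> (M *\<^sub>v v))"
proof -
  have "A *\<^sub>v v = v - (1 / 2) \<cdot>\<^sub>v (M *\<^sub>v v)"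
    unfolding A_eq using M_carrier v
    by (simp add: minus_mult_distrib_mat_vec[of _ "m * n" "m * n"] smult_mat_mult_vec)
  then show ?thesis
    using M_carrier v by (simp add: scalar_prod_minus_distrib[of _ "m * n"])
qed

lemma eigenvalue_A_bounds:
  assumes "eigenvalue A \<mu>"
  shows "-1 < \<mu> \<and> \<mu> \<le> 1"
proof -
  obtain v where v: "v \<in> carrier_vec (m * n)" and v0: "v \<noteq> 0\<^sub>v (m * n)"
    and Av: "A *\<^sub>v v = \<mu> \<cdot>\<^sub>v v"
    using assms A_carrier unfolding eigenvalue_def eigenvector_def by auto
  have "\<mu> * (v \<bullet> v) = v \<bullet> v - 1 / 2 * (v \<bullet> (M *\<^sub>v v))"
    using quadratic_form_A[OF v] v by (simp add: Av)
  moreover have "0 < v \<bullet> v"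
    using real_scalar_prod_self_ge_0[of v] real_scalar_prod_self_eq_0_iff[OF v] v0 by simp
  moreover note quadratic_form_M_nonneg[OF v] quadratic_form_M_less[OF v v0]
  ultimately have "\<mu> * (v \<bullet> v) \<le> 1 * (v \<bullet> v)" and "-1 * (v \<bullet> v) < \<mu> * (v \<bullet> v)"
    by linarith+
  with \<open>0 < v \<bullet> v\<close> show ?thesis
    by (simp only: mult_le_cancel_right_pos mult_less_cancel_right_pos)
qed

lemma C_mult_arc_blocks_eq_if_M_mult_vec_eq_0:
  assumes G_all: "G = {..<d}" and v: "v \<in> carrier_vec (m * n)"
    and Mv: "M *\<^sub>v v = 0\<^sub>v (m * n)" and k: "k < d"
  shows "C k *\<^sub>v block_vec n v (snd (e k)) = C k *\<^sub>v block_vec n v (fst (e k))"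
proof -
  have "(\<Sum>k\<in>G. w k * ((C k *\<^sub>v arc_diff v k) \<bullet> (C k *\<^sub>v arc_diff v k))) = 0"
    using quadratic_form_M[OF v] Mv v by simp
  moreover have "0 \<le> w k * ((C k *\<^sub>v arc_diff v k) \<bullet> (C k *\<^sub>v arc_diff v k))" for k
    by (intro mult_nonneg_nonneg weight_nonneg real_scalar_prod_self_ge_0)
  moreover have kG: "k \<in> G" using k G_all by simp
  ultimately have "w k * ((C k *\<^sub>v arc_diff v k) \<bullet> (C k *\<^sub>v arc_diff v k)) = 0"
    using G_all by (subst (asm) sum_nonneg_eq_0_iff) auto
  moreover have "0 < w k"
    using kG by (simp add: metropolis_weight_def)
  ultimately have "(C k *\<^sub>v arc_diff v k) \<bullet> (C k *\<^sub>v arc_diff v k) = 0"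
    by simp
  moreover have y: "arc_diff v k \<in> carrier_vec n"
    by (simp add: arc_diff_def)
  ultimately have "C k *\<^sub>v arc_diff v k = 0\<^sub>v (dim_row (C k))"
    using real_scalar_prod_self_eq_0_iff[OF mult_mat_vec_carrier[OF C_carrier[OF k] y]] by blast
  moreover have "C k *\<^sub>v arc_diff v k =
      C k *\<^sub>v block_vec n v (snd (e k)) - C k *\<^sub>v block_vec n v (fst (e k))"
    unfolding arc_diff_def by (rule mult_minus_distrib_mat_vec[OF C_carrier[OF k]]) simp_all
  ultimately have diff: "C k *\<^sub>v block_vec n v (snd (e k)) - C k *\<^sub>v block_vec n v (fst (e k)) =
      0\<^sub>v (dim_row (C k))"
    by simp
  have "(C k *\<^sub>v block_vec n v (snd (e k))) $ i = (C k *\<^sub>v block_vec n v (fst (e k))) $ i"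
    if "i < dim_row (C k)" for i
    using that arg_cong[OF diff, of "\<lambda>x. x $ i"] by simp
  then show ?thesis
    by (intro eq_vecI) simp_all
qed

lemma M_mult_vec_eq_0_iff:
  assumes G_all: "G = {..<d}" and wc: "well_configured m n d e C"
    and v: "v \<in> carrier_vec (m * n)"
  shows "M *\<^sub>v v = 0\<^sub>v (m * n) \<longleftrightarrow> (\<forall>u<m. block_vec n v u = block_vec n v (m - 1))"
proof
  assume "M *\<^sub>v v = 0\<^sub>v (m * n)"
  then have C_eq: "\<forall>k<d. C k *\<^sub>v block_vec n v (snd (e k)) = C k *\<^sub>v block_vec n v (fst (e k))"
    using C_mult_arc_blocks_eq_if_M_mult_vec_eq_0[OF G_all v] by blast
  have wc': "(\<forall>i<m. block_vec n v i \<in> carrier_vec n) \<longrightarrow>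
      (\<forall>k<d. C k *\<^sub>v block_vec n v (snd (e k)) = C k *\<^sub>v block_vec n v (fst (e k))) \<longrightarrow>
      (\<forall>i<m. \<forall>j<m. block_vec n v i = block_vec n v j)"
    using wc unfolding well_configured_def by (rule spec)
  have blocks_carrier: "\<forall>i<m. block_vec n v i \<in> carrier_vec n"
    by simp
  have all_eq: "\<forall>i<m. \<forall>j<m. block_vec n v i = block_vec n v j"
    by (rule mp[OF mp[OF wc' blocks_carrier] C_eq])
  show "\<forall>u<m. block_vec n v u = block_vec n v (m - 1)"
  proof (intro allI impI)
    fix u assume "u < m"
    then show "block_vec n v u = block_vec n v (m - 1)"
      using all_eq[rule_format, of u "m - 1"] by simp
  qed
next
  assume blocks: "\<forall>u<m. block_vec n v u = block_vec n v (m - 1)"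
  have "transpose_mat Jbar *\<^sub>v v = 0\<^sub>v (d * n)"
  proof (rule eq_vec_blocksI)
    fix k assume k: "k < d"
    then have "block_vec n v (snd (e k)) = block_vec n v (fst (e k))"
      using blocks[rule_format, of "snd (e k)"] blocks[rule_format, of "fst (e k)"] arc_ends[OF k]
      by simp
    then have "arc_diff v k = 0\<^sub>v n"
      by (simp add: arc_diff_def)
    then show "block_vec n (transpose_mat Jbar *\<^sub>v v) k = block_vec n (0\<^sub>v (d * n)) k"
      using k by (simp add: block_vec_transpose_Jbar_mult[OF v k] block_vec_zero)
  qed (use Jbar_carrier v in auto)
  then show "M *\<^sub>v v = 0\<^sub>v (m * n)"
    unfolding M_mult_vec[OF v] using Jbar_carrier Lambda_carrier by (simp add: mult_mat_vec_zero)
qed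

lemma char_matrix_A_one: "char_matrix A 1 = (- 1 / 2) \<cdot>\<^sub>m M"
  using M_carrier by (intro eq_matI) (auto simp: char_matrix_def A_eq)

lemma dim_eigenspace_A_one:
  assumes G_all: "G = {..<d}" and wc: "well_configured m n d e C" and m: "0 < m"
  shows "dim_gen_eigenspace A 1 1 = n"
proof -
  have "mat_kernel (char_matrix A 1 ^\<^sub>m 1) = mat_kernel (blocks_equal_mat m n)"
  proof (intro Set.set_eqI)
    fix v
    have "v \<in> mat_kernel (char_matrix A 1 ^\<^sub>m 1) \<longleftrightarrow>
        v \<in> carrier_vec (m * n) \<and> (- 1 / 2) \<cdot>\<^sub>v (M *\<^sub>v v) = 0\<^sub>v (m * n)"
      using M_carrier Jbar_carrier
      by (auto simp: char_matrix_A_one mat_kernel_def smult_mat_mult_vec[OF M_carrier])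
    also have "\<dots> \<longleftrightarrow> v \<in> carrier_vec (m * n) \<and> M *\<^sub>v v = 0\<^sub>v (m * n)"
      using M_carrier by (auto simp: vec_eq_iff)
    also have "\<dots> \<longleftrightarrow> v \<in> mat_kernel (blocks_equal_mat m n)"
      using M_mult_vec_eq_0_iff[OF G_all wc] mat_kernel_blocks_equal_mat[OF m] by blast
    finally show "v \<in> mat_kernel (char_matrix A 1 ^\<^sub>m 1) \<longleftrightarrow> v \<in> mat_kernel (blocks_equal_mat m n)" .
  qed
  moreover have "dim_col (char_matrix A 1 ^\<^sub>m 1) = m * n"
    using char_matrix_closed[OF A_carrier, of 1] by simp
  ultimately show ?thesis
    unfolding dim_gen_eigenspace_def kernel_dim_def using kernel_dim_blocks_equal_mat[OF m]
    by simp
qed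

end

theorem lemma8:
  fixes m n d :: nat and e :: "nat \<Rightarrow> nat \<times> nat" and C :: "nat \<Rightarrow> real mat"
    and G :: "nat set"
  assumes N_graph: "arc_digraph m d e"
    and N_sym: "symmetric_arcs e {..<d}"
    and C_orth: "\<forall>k<d. dim_col (C k) = n \<and> C k * transpose_mat (C k) = 1\<^sub>m (dim_row (C k))"
    and G_sub: "G \<subseteq> {..<d}"
    and G_sym: "symmetric_arcs e G"
  shows "(\<forall>\<mu>. eigenvalue (A_mat m n d e C G) \<mu> \<longrightarrow> -1 < \<mu> \<and> \<mu> \<le> 1)
    \<and> ((G = {..<d} \<and> m > 0 \<and> well_configured m n d e C) \<longrightarrow>
         order 1 (char_poly (A_mat m n d e C G)) = n \<and>
         (\<forall>\<mu>. eigenvalue (A_mat m n d e C G) \<mu> \<and> \<mu> \<noteq> 1 \<longrightarrow> -1 < \<mu> \<and> \<mu> < 1))"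
proof -
  interpret metropolis_subgraph m n d e C G
    using N_graph C_orth G_sub G_sym by unfold_locales
  have "order 1 (char_poly A) = n"
    if "G = {..<d}" "well_configured m n d e C" "0 < m"
    using real_symmetric_order_char_poly[OF A_carrier A_symmetric] dim_eigenspace_A_one[OF that]
    by simp
  then show ?thesis
    using eigenvalue_A_bounds by fastforce
qed

end
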